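(* Consider either the fixed $p$-processor cup game (for some $p$) or the variable-processor cup game, in either the negative-fill or the non-negative-fill version. If a state $A$ weakly monopolizes a state $B$, then for every $t\ge0$, $\operatorname{GREEDY}(A,t)\ge\operatorname{OPT}(B,t)$.
   Context: A state is a multiset of $n$ real fills. In the variable-processor game, each round the filler chooses an integer $1\le p\le n$ and reals $a_i\in[0,1]$ with $\sum a_i=p$, adds $a_i$ to cup $i$, and then the emptier chooses $p$ distinct cups and removes one unit from each (fill $x\mapsto\max(0,x-1)$ in the non-negative-fill version, $x\mapsto x-1$ in the negative-fill version); the fixed $p$-processor game is the same with $p$ fixed. Backlog = maximum fill. $\operatorname{OPT}(S,0)$ is the backlog of $S$ and $\operatorname{OPT}(S,t)=\sup_{S'}\min_{S''}\operatorname{OPT}(S'',t-1)$ with $S'$ over states reachable from $S$ by a filler move and $S''$ over states reachable from $S'$ by an emptier move. $\operatorname{GREEDY}(S,t)$ is the supremum backlog a filler can achieve after $t$ rounds from $S$ when the emptier always empties the $p$ fullest cups. $A$ monopolizes $B$ if the cups can be labeled $1,\dots,n$ in both states so that cups $3,\dots,n$ have equal fills in $A$ and $B$, cup $1$ in $A$ has more water than cup $2$ in $B$, cup $1$ in $A$ has exactly one more unit than cup $1$ in $B$, and cup $2$ in $B$ has exactly $c$ more units than cup $2$ in $A$ for some $0\le c\le1$. $A$ dominates $B$ if the cups can be labeled so that each cup in $A$ has at least as much water as the same-labeled cup in $B$. $A$ weakly monopolizes $B$ if $A$ monopolizes or dominates $B$. *)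

theory Defs
  imports Complex_Main "HOL-Library.Multiset"
begin

text \<open>Game parameters:
  P  : the set of processor counts the filler may choose from
       (fixed p-processor game: P = {p}; variable-processor game: P = {1..n});
  nn : True for the non-negative-fill version, False for the negative-fill version.\<close>

definition dec :: "bool \<Rightarrow> real \<Rightarrow> real" where
  "dec nn x = (if nn then max 0 (x - 1) else x - 1)"

definition backlog :: "real multiset \<Rightarrow> real" where
  "backlog S = Max (set_mset S)"

definition filler_moves :: "nat set \<Rightarrow> real multiset \<Rightarrow> (nat \<times> real multiset) set" where
  "filler_moves P S = {(p, S'). p \<in> P \<and>
     (\<exists>xs a. mset xs = S \<and> length a = length xs \<and>
        (\<forall>i<length a. 0 \<le> a ! i \<and> a ! i \<le> 1) \<and> sum_list a = real p \<and>
        S' = mset (map2 (+) xs a))}"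

definition emptier_moves :: "bool \<Rightarrow> nat \<Rightarrow> real multiset \<Rightarrow> real multiset set" where
  "emptier_moves nn p S = {S''. \<exists>ys J. mset ys = S \<and> J \<subseteq> {..<length ys} \<and> card J = p \<and>
     S'' = mset (map (\<lambda>i. if i \<in> J then dec nn (ys ! i) else ys ! i) [0..<length ys])}"

definition greedy_empty :: "bool \<Rightarrow> nat \<Rightarrow> real multiset \<Rightarrow> real multiset" where
  "greedy_empty nn p S = (let xs = rev (sorted_list_of_multiset S) in
     mset (map (dec nn) (take p xs) @ drop p xs))"

primrec OPT :: "nat set \<Rightarrow> bool \<Rightarrow> real multiset \<Rightarrow> nat \<Rightarrow> real" where
  "OPT P nn S 0 = backlog S"
| "OPT P nn S (Suc t) =
     (SUP m \<in> filler_moves P S. INF S'' \<in> emptier_moves nn (fst m) (snd m). OPT P nn S'' t)"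

primrec GREEDY :: "nat set \<Rightarrow> bool \<Rightarrow> real multiset \<Rightarrow> nat \<Rightarrow> real" where
  "GREEDY P nn S 0 = backlog S"
| "GREEDY P nn S (Suc t) =
     (SUP m \<in> filler_moves P S. GREEDY P nn (greedy_empty nn (fst m) (snd m)) t)"

text \<open>Labelings: lists xs, ys enumerating A and B; index 0 = cup 1, index 1 = cup 2.\<close>
definition monopolizes :: "real multiset \<Rightarrow> real multiset \<Rightarrow> bool" where
  "monopolizes A B = (\<exists>xs ys. mset xs = A \<and> mset ys = B \<and> length xs = length ys \<and>
     2 \<le> length xs \<and>
     (\<forall>i. 2 \<le> i \<and> i < length xs \<longrightarrow> xs ! i = ys ! i) \<and>
     xs ! 0 > ys ! 1 \<and>
     xs ! 0 = ys ! 0 + 1 \<and>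
     (\<exists>c. 0 \<le> c \<and> c \<le> 1 \<and> ys ! 1 = xs ! 1 + c))"

definition dominates :: "real multiset \<Rightarrow> real multiset \<Rightarrow> bool" where
  "dominates A B = (\<exists>xs ys. mset xs = A \<and> mset ys = B \<and> length xs = length ys \<and>
     (\<forall>i<length xs. ys ! i \<le> xs ! i))"

definition weakly_monopolizes :: "real multiset \<Rightarrow> real multiset \<Rightarrow> bool" where
  "weakly_monopolizes A B = (monopolizes A B \<or> dominates A B)"

end

theory Submission
  imports Defs
begin

text \<open>
  By induction on t it suffices that weak monopolization survives a round: every filler move
  on B is answered by a filler move with the same p on A, and after the greedy emptier has
  acted on A' some emptier move on B' restores weak monopolization; at t = 0 weak
  monopolization gives backlog B \<le> backlog A. Domination is preserved by applying the same
  moves cup by cup. Monopolization is preserved by copying the moves, except in two cases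
  where it degenerates into domination with cups 1 and 2 swapped: when copying the filler's
  move would let cup 2 of B' catch up with cup 1 of A', and, in the non-negative-fill game,
  when both cups are emptied and cup 1 of B is clamped at 0.
  Since OPT and GREEDY are suprema and infima of reals, the induction also needs the a priori
  bounds backlog S - t \<le> OPT S t \<le> max (backlog S) 0 + t, which hold because a round
  lowers the backlog by at most 1 and raises max (backlog S) 0 by at most 1.
\<close>

lemma filler_moves_mset_iff:
  "(p, S') \<in> filler_moves P (mset xs) \<longleftrightarrow>
     p \<in> P \<and> (\<exists>a. length a = length xs \<and> set a \<subseteq> {0..1} \<and> sum_list a = real p \<and>
       S' = mset (map2 (+) xs a))"
proof
  assume "(p, S') \<in> filler_moves P (mset xs)"
  then obtain xs0 a0 where p: "p \<in> P" and xs0: "mset xs0 = mset xs" and len: "length a0 = length xs0"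
    and a0: "\<forall>i<length a0. 0 \<le> a0 ! i \<and> a0 ! i \<le> 1" "sum_list a0 = real p"
    and S': "S' = mset (map2 (+) xs0 a0)"
    unfolding filler_moves_def by auto
  obtain a where a: "length a = length xs" and zip: "mset (zip xs a) = mset (zip xs0 a0)"
    using ex_mset_zip_left[OF len[symmetric] xs0[symmetric]] by blast
  have "mset a = mset a0"
    using a len zip by (metis map_snd_zip mset_map)
  then have "set a = set a0" and "sum_list a = sum_list a0"
    by (metis set_mset_mset, metis sum_mset_sum_list)
  moreover have "set a0 \<subseteq> {0..1}"
    using a0(1) by (auto simp: in_set_conv_nth)
  moreover have "mset (map2 (+) xs a) = mset (map2 (+) xs0 a0)"
    using zip by (metis mset_map)
  ultimately show "p \<in> P \<and> (\<exists>a. length a = length xs \<and> set a \<subseteq> {0..1} \<and> sum_list a = real p \<and>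
       S' = mset (map2 (+) xs a))"
    using p a a0(2) S' by (auto intro!: exI[of _ a])
next
  assume "p \<in> P \<and> (\<exists>a. length a = length xs \<and> set a \<subseteq> {0..1} \<and> sum_list a = real p \<and>
       S' = mset (map2 (+) xs a))"
  then show "(p, S') \<in> filler_moves P (mset xs)"
    unfolding filler_moves_def by (fastforce simp: subset_iff)
qed

lemma dec_lower: "x - 1 \<le> dec nn x"
  by (simp add: dec_def)

lemma dec_upper: "dec nn x \<le> max x 0"
  by (simp add: dec_def)

lemma dec_nonneg: "nn \<Longrightarrow> 0 \<le> dec nn x"
  by (simp add: dec_def)

lemma dec_mono: "x \<le> y \<Longrightarrow> dec nn x \<le> dec nn y"
  by (auto simp: dec_def)

definition dec_if :: "bool \<Rightarrow> real \<Rightarrow> bool \<Rightarrow> real" where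
  "dec_if nn x b = (if b then dec nn x else x)"

lemma emptier_moves_maskI:
  assumes "length g = length ys" "length (filter id g) = p"
  shows "mset (map2 (dec_if nn) ys g) \<in> emptier_moves nn p (mset ys)"
proof -
  define J where "J = {i. i < length ys \<and> g ! i}"
  have "card J = p"
    using assms unfolding J_def by (simp add: length_filter_conv_card)
  moreover have "map2 (dec_if nn) ys g =
      map (\<lambda>i. if i \<in> J then dec nn (ys ! i) else ys ! i) [0..<length ys]"
    using assms(1) by (intro nth_equalityI) (auto simp: J_def dec_if_def)
  ultimately show ?thesis
    unfolding emptier_moves_def by (auto intro!: exI[of _ ys] exI[of _ J] simp: J_def)
qed

lemma greedy_empty_mask:
  assumes "p \<le> length xs"
  obtains g where "length g = length xs" "length (filter id g) = p"
    and "\<And>i j. i < length xs \<Longrightarrow> j < length xs \<Longrightarrow> g ! i \<Longrightarrow> \<not> g ! j \<Longrightarrow> xs ! j \<le> xs ! i"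
    and "greedy_empty nn p (mset xs) = mset (map2 (dec_if nn) xs g)"
proof -
  define zs where "zs = rev (sort xs)"
  define g0 where "g0 = replicate p True @ replicate (length xs - p) False"
  have len: "length zs = length g0" and zs: "mset xs = mset zs"
    using assms by (simp_all add: zs_def g0_def)
  have sorted: "sorted (rev zs)"
    by (simp add: zs_def)
  obtain g where g: "length g = length xs" and zip: "mset (zip xs g) = mset (zip zs g0)"
    using ex_mset_zip_left[OF len zs] by blast
  have "mset g = mset g0"
    using g len zs zip by (metis map_snd_zip mset_map size_mset)
  then have "length (filter id g) = length (filter id g0)"
    by (metis mset_filter size_mset)
  also have "\<dots> = p"
    by (simp add: g0_def)
  finally have count: "length (filter id g) = p" .
  have g0_nth: "g0 ! k \<longleftrightarrow> k < p" if "k < length zs" for k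
    using that len assms by (auto simp: g0_def nth_append)
  have in_zip: "(xs ! k, g ! k) \<in> set (zip zs g0)" if "k < length xs" for k
  proof -
    have "(xs ! k, g ! k) \<in> set (zip xs g)"
      using that g by (auto simp: in_set_zip)
    then show ?thesis
      using zip by (metis mset_eq_setD)
  qed
  have ordered: "xs ! j \<le> xs ! i"
    if ij: "i < length xs" "j < length xs" "g ! i" "\<not> g ! j" for i j
  proof -
    obtain i' j' where "i' < length zs" "zs ! i' = xs ! i" "g0 ! i'"
      and "j' < length zs" "zs ! j' = xs ! j" "\<not> g0 ! j'"
      using in_zip[OF ij(1)] in_zip[OF ij(2)] ij(3,4) by (auto simp: in_set_zip)
    moreover from this have "i' \<le> j'"
      using g0_nth by fastforce
    ultimately show ?thesis
      using sorted_rev_nth_mono[OF sorted] by metis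
  qed
  have "greedy_empty nn p (mset xs) = mset (map (dec nn) (take p zs) @ drop p zs)"
    by (simp only: greedy_empty_def Let_def zs_def sorted_list_of_multiset_mset)
  also have "map (dec nn) (take p zs) @ drop p zs = map2 (dec_if nn) zs g0"
    using assms len by (intro nth_equalityI) (auto simp: g0_def nth_append dec_if_def)
  also have "mset (map2 (dec_if nn) zs g0) = mset (map2 (dec_if nn) xs g)"
    by (metis zip mset_map)
  finally show thesis
    using that g count ordered by blast
qed

lemma greedy_empty_in_emptier_moves:
  "p \<le> size S \<Longrightarrow> greedy_empty nn p S \<in> emptier_moves nn p S"
  by (metis ex_mset size_mset greedy_empty_mask emptier_moves_maskI)

lemma size_filler_move:
  assumes "(p, S') \<in> filler_moves P S"
  shows "size S' = size S" and "p \<le> size S"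
proof -
  obtain xs where xs: "mset xs = S"
    using ex_mset by blast
  then obtain a where "length a = length xs" "set a \<subseteq> {0..1}" "sum_list a = real p"
    and "S' = mset (map2 (+) xs a)"
    using assms filler_moves_mset_iff by blast
  moreover have "sum_list a \<le> sum_list (replicate (length a) 1)"
    using \<open>set a \<subseteq> {0..1}\<close> by (intro sum_list_mono2) (auto simp: subset_iff)
  ultimately show "size S' = size S" "p \<le> size S"
    using xs by (auto simp: sum_list_replicate)
qed

lemma size_emptier_move: "S'' \<in> emptier_moves nn p S \<Longrightarrow> size S'' = size S"
  unfolding emptier_moves_def by auto

lemma size_greedy_empty: "size (greedy_empty nn p S) = size S"
  by (metis greedy_empty_def length_append length_map length_rev
      mset_sorted_list_of_multiset size_mset append_take_drop_id)

lemma filler_moves_nonempty: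
  assumes "p \<in> P" and "p \<le> size S"
  shows "filler_moves P S \<noteq> {}"
proof -
  obtain xs where xs: "mset xs = S"
    using ex_mset by blast
  let ?a = "replicate p 1 @ replicate (length xs - p) (0 :: real)"
  have "(p, mset (map2 (+) xs ?a)) \<in> filler_moves P S"
    using assms unfolding xs[symmetric] filler_moves_mset_iff
    by (intro conjI exI[of _ ?a]) (auto simp: sum_list_replicate)
  then show ?thesis
    by blast
qed

lemma filler_move_nonneg:
  assumes "(p, S') \<in> filler_moves P S" and "\<forall>x\<in>#S. 0 \<le> x"
  shows "\<forall>x\<in>#S'. 0 \<le> x"
proof -
  obtain xs where xs: "mset xs = S"
    using ex_mset by blast
  then obtain a where "set a \<subseteq> {0..1}" and "S' = mset (map2 (+) xs a)"
    using assms(1) filler_moves_mset_iff by blast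
  then show ?thesis
    using assms(2) xs by (fastforce dest: set_zip_leftD set_zip_rightD)
qed

lemma emptier_move_nonneg:
  "nn \<Longrightarrow> S'' \<in> emptier_moves nn p S \<Longrightarrow> \<forall>x\<in>#S. 0 \<le> x \<Longrightarrow> \<forall>x\<in>#S''. 0 \<le> x"
  unfolding emptier_moves_def using dec_nonneg by auto

lemma backlog_ge: "x \<in># S \<Longrightarrow> x \<le> backlog S"
  by (simp add: backlog_def)

lemma backlog_in: "S \<noteq> {#} \<Longrightarrow> backlog S \<in># S"
  by (simp add: backlog_def)

lemma backlog_le_iff: "S \<noteq> {#} \<Longrightarrow> backlog S \<le> M \<longleftrightarrow> (\<forall>x\<in>#S. x \<le> M)"
  by (simp add: backlog_def)

lemma backlog_filler_move:
  assumes "(p, S') \<in> filler_moves P S" and "S \<noteq> {#}"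
  shows "backlog S \<le> backlog S'" and "backlog S' \<le> backlog S + 1"
proof -
  obtain xs where xs: "mset xs = S"
    using ex_mset by blast
  then obtain a where len: "length a = length xs" and a: "set a \<subseteq> {0..1}"
    and S': "S' = mset (map2 (+) xs a)"
    using assms(1) filler_moves_mset_iff by blast
  have S'_ne: "S' \<noteq> {#}"
    using assms(2) xs len S' by auto
  obtain k where k: "k < length xs" "xs ! k = backlog S"
    using backlog_in[OF assms(2)] xs by (metis in_set_conv_nth set_mset_mset)
  have "map2 (+) xs a ! k \<in> set (map2 (+) xs a)"
    using k len by (intro nth_mem) simp
  then have "xs ! k + a ! k \<le> backlog S'"
    using k(1) len unfolding S' by (intro backlog_ge) simp
  moreover have "0 \<le> a ! k"
    using a k(1) len by (metis atLeastAtMost_iff nth_mem subsetD)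
  ultimately show "backlog S \<le> backlog S'"
    using k(2) by linarith
  have "y \<le> backlog S + 1" if y: "y \<in># S'" for y
  proof -
    obtain x b where "(x, b) \<in> set (zip xs a)" "y = x + b"
      using y S' by auto
    then have "x \<in># S" "b \<le> 1" "y = x + b"
      using xs a by (auto dest: set_zip_leftD set_zip_rightD)
    then show ?thesis
      using backlog_ge by fastforce
  qed
  then show "backlog S' \<le> backlog S + 1"
    using S'_ne backlog_le_iff by blast
qed

lemma backlog_emptier_move:
  assumes "S'' \<in> emptier_moves nn p S" and "S \<noteq> {#}"
  shows "backlog S - 1 \<le> backlog S''" and "backlog S'' \<le> max (backlog S) 0"
proof -
  obtain ys J where ys: "mset ys = S"
    and S'': "S'' = mset (map (\<lambda>i. if i \<in> J then dec nn (ys ! i) else ys ! i) [0..<length ys])"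
    using assms(1) unfolding emptier_moves_def by blast
  have S''_ne: "S'' \<noteq> {#}"
    using size_emptier_move[OF assms(1)] assms(2) by auto
  obtain k where k: "k < length ys" "ys ! k = backlog S"
    using backlog_in[OF assms(2)] ys by (metis in_set_conv_nth set_mset_mset)
  have "(if k \<in> J then dec nn (ys ! k) else ys ! k) \<le> backlog S''"
    using k(1) unfolding S'' by (intro backlog_ge) simp
  then show "backlog S - 1 \<le> backlog S''"
    using k(2) dec_lower[of "ys ! k" nn] by (auto split: if_splits)
  have "y \<le> max (backlog S) 0" if y: "y \<in># S''" for y
  proof -
    obtain i where i: "i < length ys" and y_eq: "y = (if i \<in> J then dec nn (ys ! i) else ys ! i)"
      using y S'' by auto
    have "ys ! i \<le> backlog S"
      using i ys by (intro backlog_ge) auto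
    then show ?thesis
      using y_eq dec_upper[of nn "ys ! i"] by auto
  qed
  then show "backlog S'' \<le> max (backlog S) 0"
    using S''_ne backlog_le_iff by blast
qed

lemma backlog_round:
  assumes "(p, S') \<in> filler_moves P S" and "S'' \<in> emptier_moves nn p S'" and "S \<noteq> {#}"
  shows "backlog S - 1 \<le> backlog S''" and "max (backlog S'') 0 \<le> max (backlog S) 0 + 1"
proof -
  have "S' \<noteq> {#}"
    using size_filler_move(1)[OF assms(1)] assms(3) by auto
  then have "backlog S' - 1 \<le> backlog S''" "backlog S'' \<le> max (backlog S') 0"
    using backlog_emptier_move[OF assms(2)] by blast+
  moreover have "backlog S \<le> backlog S'" "backlog S' \<le> backlog S + 1"
    using backlog_filler_move[OF assms(1,3)] by blast+
  ultimately show "backlog S - 1 \<le> backlog S''" "max (backlog S'') 0 \<le> max (backlog S) 0 + 1"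
    by (auto simp: max_def split: if_splits)
qed

lemma monopolizes_iff:
  "monopolizes A B \<longleftrightarrow>
     (\<exists>u v c R. A = mset ((u + 1) # v # R) \<and> B = mset (u # (v + c) # R) \<and>
        0 \<le> c \<and> c \<le> 1 \<and> v + c < u + 1)"
proof
  assume "monopolizes A B"
  then obtain xs ys c where xs: "mset xs = A" and ys: "mset ys = B" and len: "length xs = length ys"
    and two: "2 \<le> length xs" and rest: "\<forall>i. 2 \<le> i \<and> i < length xs \<longrightarrow> xs ! i = ys ! i"
    and "xs ! 0 > ys ! 1" "xs ! 0 = ys ! 0 + 1" "0 \<le> c" "c \<le> 1" "ys ! 1 = xs ! 1 + c"
    unfolding monopolizes_def by blast
  moreover obtain x0 x1 R y0 y1 R' where "xs = x0 # x1 # R" "ys = y0 # y1 # R'"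
    using two len by (metis One_nat_def Suc_1 Suc_le_length_iff)
  moreover from this have "R = R'"
    using len rest by (intro nth_equalityI) (auto dest: spec[of _ "Suc (Suc _)"])
  ultimately show "\<exists>u v c R. A = mset ((u + 1) # v # R) \<and> B = mset (u # (v + c) # R) \<and>
        0 \<le> c \<and> c \<le> 1 \<and> v + c < u + 1"
    by auto
next
  assume "\<exists>u v c R. A = mset ((u + 1) # v # R) \<and> B = mset (u # (v + c) # R) \<and>
        0 \<le> c \<and> c \<le> 1 \<and> v + c < u + 1"
  then obtain u v c R where "A = mset ((u + 1) # v # R)" "B = mset (u # (v + c) # R)"
    and "0 \<le> c" "c \<le> 1" "v + c < u + 1"
    by blast
  then show "monopolizes A B"
    unfolding monopolizes_def
    by (intro exI[of _ "(u + 1) # v # R"] exI[of _ "u # (v + c) # R"]) (auto simp: nth_Cons')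
qed

lemma monopolizesI:
  "0 \<le> c \<Longrightarrow> c \<le> 1 \<Longrightarrow> v + c < u + 1 \<Longrightarrow>
    monopolizes (mset ((u + 1) # v # R)) (mset (u # (v + c) # R))"
  unfolding monopolizes_iff by blast

lemma dominates_iff:
  "dominates A B \<longleftrightarrow> (\<exists>xs ys. mset xs = A \<and> mset ys = B \<and> list_all2 (\<ge>) xs ys)"
  unfolding dominates_def list_all2_conv_all_nth by auto

lemma dominates_Cons2:
  "a' \<le> a \<Longrightarrow> b' \<le> b \<Longrightarrow> dominates (mset (a # b # R)) (mset (a' # b' # R))"
  unfolding dominates_iff
  by (intro exI[of _ "a # b # R"] exI[of _ "a' # b' # R"]) (simp add: list_all2_refl)

lemma weakly_monopolizes_size: "weakly_monopolizes A B \<Longrightarrow> size B = size A"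
  unfolding weakly_monopolizes_def dominates_iff monopolizes_iff
  by (auto dest: list_all2_lengthD)

lemma weakly_monopolizes_backlog_le:
  assumes wm: "weakly_monopolizes A B" and A: "A \<noteq> {#}"
  shows "backlog B \<le> backlog A"
proof -
  have "\<exists>x\<in>#A. y \<le> x" if y: "y \<in># B" for y
  proof (cases "dominates A B")
    case True
    then obtain xs ys where xs: "mset xs = A" and ys: "mset ys = B" and le: "list_all2 (\<ge>) xs ys"
      unfolding dominates_iff by blast
    obtain i where i: "i < length ys" "y = ys ! i"
      using y ys by (auto simp: in_set_conv_nth)
    then have "xs ! i \<in># A" "y \<le> xs ! i"
      using xs le by (auto simp: list_all2_conv_all_nth)
    then show ?thesis
      by blast
  next
    case False
    then obtain u v c R where A_eq: "A = mset ((u + 1) # v # R)" and B_eq: "B = mset (u # (v + c) # R)"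
      and "v + c < u + 1"
      using wm unfolding weakly_monopolizes_def monopolizes_iff by blast
    moreover have "u + 1 \<in># A"
      using A_eq by simp
    moreover have "y = u \<or> y = v + c \<or> y \<in># A"
      using y A_eq B_eq by auto
    ultimately show ?thesis
      by force
  qed
  moreover have "B \<noteq> {#}"
    using weakly_monopolizes_size[OF wm] A by auto
  ultimately show ?thesis
    using backlog_le_iff backlog_ge order_trans by metis
qed

lemma dominates_filler_move:
  assumes "dominates A B" and "(p, B') \<in> filler_moves P B"
  obtains A' where "(p, A') \<in> filler_moves P A" and "dominates A' B'"
proof -
  obtain xs ys where xs: "mset xs = A" and ys: "mset ys = B" and le: "list_all2 (\<ge>) xs ys"
    using assms(1) unfolding dominates_iff by blast
  obtain a where "p \<in> P" "length a = length ys" "set a \<subseteq> {0..1}" "sum_list a = real p"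
    and B': "B' = mset (map2 (+) ys a)"
    using assms(2) unfolding ys[symmetric] filler_moves_mset_iff by blast
  moreover have "length xs = length ys"
    using le by (rule list_all2_lengthD)
  ultimately have "(p, mset (map2 (+) xs a)) \<in> filler_moves P A"
    unfolding xs[symmetric] filler_moves_mset_iff by auto
  moreover have "list_all2 (\<ge>) (map2 (+) xs a) (map2 (+) ys a)"
    using le by (auto simp: list_all2_conv_all_nth)
  ultimately show thesis
    using that B' unfolding dominates_iff by blast
qed

lemma monopolizes_filler_move:
  assumes "monopolizes A B" and "(p, B') \<in> filler_moves P B"
  obtains A' where "(p, A') \<in> filler_moves P A" and "weakly_monopolizes A' B'"
proof -
  obtain u v c R where A: "A = mset ((u + 1) # v # R)" and B: "B = mset (u # (v + c) # R)"
    and c: "0 \<le> c" "c \<le> 1" "v + c < u + 1"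
    using assms(1) unfolding monopolizes_iff by blast
  obtain a where p: "p \<in> P" and len: "length a = length (u # (v + c) # R)"
    and a: "set a \<subseteq> {0..1}" "sum_list a = real p"
    and B': "B' = mset (map2 (+) (u # (v + c) # R) a)"
    using assms(2) unfolding B filler_moves_mset_iff by blast
  then obtain b0 b1 bR where ab: "a = b0 # b1 # bR"
    by (metis Suc_length_conv length_Cons)
  define RR where "RR = map2 (+) R bR"
  have b: "0 \<le> b0" "b0 \<le> 1" "0 \<le> b1" "b1 \<le> 1" "set bR \<subseteq> {0..1}" "length bR = length R"
    using a(1) len ab by auto
  have B'_eq: "B' = mset ((u + b0) # (v + c + b1) # RR)"
    using B' ab RR_def by simp
  have filler_A: "(p, mset ((u + 1 + a0) # (v + a1) # RR)) \<in> filler_moves P A"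
    if "0 \<le> a0" "a0 \<le> 1" "0 \<le> a1" "a1 \<le> 1" "a0 + a1 = b0 + b1" for a0 a1
    using p a(2) b that unfolding A filler_moves_mset_iff ab RR_def
    by (intro conjI exI[of _ "a0 # a1 # bR"]) auto
  show thesis
  proof (cases "v + c + b1 < u + 1 + b0")
    case True
    have "monopolizes (mset ((u + b0 + 1) # (v + b1) # RR)) (mset ((u + b0) # (v + b1 + c) # RR))"
      using c True by (intro monopolizesI) auto
    then show thesis
      using that filler_A[of b0 b1] b B'_eq unfolding weakly_monopolizes_def
      by (simp add: algebra_simps)
  next
    case False
    \<comment> \<open>Copying the move would let cup 2 of B' reach cup 1 of A'. Instead, A's filler
      splits b0 + b1 between its first two cups so that A' dominates B' with these cups swapped.\<close>
    define a1 where "a1 = max (b0 + b1 - 1) (max 0 (b0 + u - v))"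
    define a0 where "a0 = b0 + b1 - a1"
    have a01: "0 \<le> a0" "a0 \<le> 1" "0 \<le> a1" "a1 \<le> 1" "v + c + b1 \<le> u + 1 + a0" "u + b0 \<le> v + a1"
      using b c False unfolding a0_def a1_def by (auto simp: max_def)
    have "dominates (mset ((u + 1 + a0) # (v + a1) # RR)) (mset ((v + c + b1) # (u + b0) # RR))"
      using a01 by (intro dominates_Cons2)
    moreover have "mset ((v + c + b1) # (u + b0) # RR) = B'"
      using B'_eq by (simp add: add_mset_commute)
    ultimately show thesis
      using that filler_A[of a0 a1] a01 unfolding weakly_monopolizes_def a0_def by auto
  qed
qed

lemma weakly_monopolizes_filler_move:
  assumes "weakly_monopolizes A B" and "(p, B') \<in> filler_moves P B"
  obtains A' where "(p, A') \<in> filler_moves P A" and "weakly_monopolizes A' B'"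
  using assms dominates_filler_move monopolizes_filler_move
  unfolding weakly_monopolizes_def by metis

lemma dominates_greedy_empty:
  assumes "dominates X Y" and "p \<le> size X"
  obtains Y'' where "Y'' \<in> emptier_moves nn p Y" and "dominates (greedy_empty nn p X) Y''"
proof -
  obtain xs ys where xs: "mset xs = X" and ys: "mset ys = Y" and le: "list_all2 (\<ge>) xs ys"
    using assms(1) unfolding dominates_iff by blast
  have len: "length xs = length ys"
    using le by (rule list_all2_lengthD)
  have "p \<le> length xs"
    using assms(2) xs by auto
  then obtain g where "length g = length xs" "length (filter id g) = p"
    and X'': "greedy_empty nn p X = mset (map2 (dec_if nn) xs g)"
    unfolding xs[symmetric] by (metis greedy_empty_mask)
  then have "mset (map2 (dec_if nn) ys g) \<in> emptier_moves nn p Y"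
    using len ys emptier_moves_maskI by metis
  moreover have "list_all2 (\<ge>) (map2 (dec_if nn) xs g) (map2 (dec_if nn) ys g)"
    using le by (auto simp: list_all2_conv_all_nth dec_if_def dec_mono)
  ultimately show thesis
    using that unfolding X'' dominates_iff by blast
qed

lemma weakly_monopolizes_dec_Cons2:
  assumes c: "0 \<le> c" "c \<le> 1" "v + c < u + 1" and nonneg: "nn \<longrightarrow> 0 \<le> u \<and> 0 \<le> v"
  shows "weakly_monopolizes (mset (dec nn (u + 1) # dec nn v # R))
           (mset (dec nn u # dec nn (v + c) # R))"
proof (cases nn)
  case False
  have "monopolizes (mset ((u - 1 + 1) # (v - 1) # R)) (mset ((u - 1) # (v - 1 + c) # R))"
    using c by (intro monopolizesI) auto
  then show ?thesis
    using False unfolding weakly_monopolizes_def dec_def by (simp add: algebra_simps)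
next
  case True
  show ?thesis
  proof (cases "1 \<le> u")
    case True
    have "monopolizes (mset ((u - 1 + 1) # max 0 (v - 1) # R))
        (mset ((u - 1) # (max 0 (v - 1) + (max 0 (v + c - 1) - max 0 (v - 1))) # R))"
      using c True by (intro monopolizesI) auto
    then show ?thesis
      using True \<open>nn\<close> unfolding weakly_monopolizes_def dec_def by simp
  next
    case False
    \<comment> \<open>Clamping at 0 empties cup 1 of Y completely, so swapping cups 1 and 2 gives domination.\<close>
    have "dominates (mset (u # max 0 (v - 1) # R)) (mset (max 0 (v + c - 1) # 0 # R))"
      using c nonneg \<open>nn\<close> by (intro dominates_Cons2) auto
    then have "dominates (mset (u # max 0 (v - 1) # R)) (mset (0 # max 0 (v + c - 1) # R))"
      by (simp add: add_mset_commute)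
    moreover have "dec nn (u + 1) = u" "dec nn u = 0"
      using False nonneg \<open>nn\<close> by (auto simp: dec_def)
    ultimately show ?thesis
      using \<open>nn\<close> unfolding weakly_monopolizes_def by (simp add: dec_def)
  qed
qed

lemma monopolizes_greedy_empty:
  assumes "monopolizes X Y" and "p \<le> size X"
    and nonneg: "nn \<longrightarrow> (\<forall>x\<in>#X. 0 \<le> x) \<and> (\<forall>x\<in>#Y. 0 \<le> x)"
  obtains Y'' where "Y'' \<in> emptier_moves nn p Y" and "weakly_monopolizes (greedy_empty nn p X) Y''"
proof -
  obtain u v c R where X: "X = mset ((u + 1) # v # R)" and Y: "Y = mset (u # (v + c) # R)"
    and c: "0 \<le> c" "c \<le> 1" "v + c < u + 1"
    using assms(1) unfolding monopolizes_iff by blast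
  have uv: "nn \<longrightarrow> 0 \<le> u \<and> 0 \<le> v"
    using nonneg X Y by auto
  obtain g where len: "length g = length ((u + 1) # v # R)" and count: "length (filter id g) = p"
    and greedy: "\<And>i j. i < length ((u + 1) # v # R) \<Longrightarrow> j < length ((u + 1) # v # R) \<Longrightarrow>
        g ! i \<Longrightarrow> \<not> g ! j \<Longrightarrow> ((u + 1) # v # R) ! j \<le> ((u + 1) # v # R) ! i"
    and X'': "greedy_empty nn p X = mset (map2 (dec_if nn) ((u + 1) # v # R) g)"
    using greedy_empty_mask[of p "(u + 1) # v # R" nn] assms(2) X by auto
  then obtain g0 g1 gR where g: "g = g0 # g1 # gR"
    by (metis Suc_length_conv length_Cons)
  define RR where "RR = map2 (dec_if nn) R gR"
  have X''_eq: "greedy_empty nn p X = mset (dec_if nn (u + 1) g0 # dec_if nn v g1 # RR)"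
    using X'' g RR_def by simp
  have emptier_Y: "mset (dec_if nn u h0 # dec_if nn (v + c) h1 # RR) \<in> emptier_moves nn p Y"
    if "length (filter id (h0 # h1 # gR)) = p" for h0 h1
    using emptier_moves_maskI[of "h0 # h1 # gR" "u # (v + c) # R" p nn] len that
    unfolding Y g RR_def by simp
  have "\<not> (g1 \<and> \<not> g0)"
    using greedy[of 1 0] c g by auto
  then consider "g0" "g1" | "g0" "\<not> g1" | "\<not> g0" "\<not> g1"
    by blast
  then show thesis
  proof cases
    case 1
    then show thesis
      using that X''_eq emptier_Y[of True True] count weakly_monopolizes_dec_Cons2[OF c uv]
      by (simp add: g dec_if_def)
  next
    case 2
    \<comment> \<open>Greedy empties cup 1 but not cup 2 of X; Y's emptier does the opposite.\<close>
    have "dominates (mset (dec nn (u + 1) # v # RR)) (mset (u # dec nn (v + c) # RR))"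
      using c uv by (intro dominates_Cons2) (auto simp: dec_def)
    then show thesis
      using 2 that X''_eq emptier_Y[of False True] count unfolding weakly_monopolizes_def
      by (simp add: g dec_if_def)
  next
    case 3
    have "monopolizes (mset ((u + 1) # v # RR)) (mset (u # (v + c) # RR))"
      using c by (rule monopolizesI)
    then show thesis
      using 3 that X''_eq emptier_Y[of False False] count unfolding weakly_monopolizes_def
      by (simp add: g dec_if_def)
  qed
qed

lemma weakly_monopolizes_greedy_empty:
  assumes "weakly_monopolizes X Y" and "p \<le> size X"
    and "nn \<longrightarrow> (\<forall>x\<in>#X. 0 \<le> x) \<and> (\<forall>x\<in>#Y. 0 \<le> x)"
  obtains Y'' where "Y'' \<in> emptier_moves nn p Y" and "weakly_monopolizes (greedy_empty nn p X) Y''"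
  using assms dominates_greedy_empty monopolizes_greedy_empty
  unfolding weakly_monopolizes_def by metis

lemma weakly_monopolizes_round:
  assumes wm: "weakly_monopolizes A B" and B': "(p, B') \<in> filler_moves P B"
    and nonneg: "nn \<longrightarrow> (\<forall>x\<in>#A. 0 \<le> x) \<and> (\<forall>x\<in>#B. 0 \<le> x)"
  obtains A' B'' where "(p, A') \<in> filler_moves P A" and "B'' \<in> emptier_moves nn p B'"
    and "weakly_monopolizes (greedy_empty nn p A') B''"
proof -
  obtain A' where A': "(p, A') \<in> filler_moves P A" and wm': "weakly_monopolizes A' B'"
    using weakly_monopolizes_filler_move[OF wm B'] .
  have "p \<le> size A'"
    using size_filler_move[OF A'] by simp
  moreover have "nn \<longrightarrow> (\<forall>x\<in>#A'. 0 \<le> x) \<and> (\<forall>x\<in>#B'. 0 \<le> x)"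
    using nonneg filler_move_nonneg[OF A'] filler_move_nonneg[OF B'] by blast
  ultimately obtain B'' where "B'' \<in> emptier_moves nn p B'"
    and "weakly_monopolizes (greedy_empty nn p A') B''"
    by (rule weakly_monopolizes_greedy_empty[OF wm'])
  then show thesis
    by (rule that[OF A'])
qed

lemma cSUP_bounds:
  fixes f :: "'a \<Rightarrow> 'b::conditionally_complete_lattice"
  assumes "X \<noteq> {}" and "\<And>x. x \<in> X \<Longrightarrow> lo \<le> f x \<and> f x \<le> hi"
  shows "lo \<le> (SUP x\<in>X. f x) \<and> (SUP x\<in>X. f x) \<le> hi"
proof -
  obtain x where x: "x \<in> X"
    using assms(1) by blast
  have "bdd_above (f ` X)"
    using assms(2) by (intro bdd_aboveI2) blast
  then have "f x \<le> (SUP x\<in>X. f x)"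
    using x by (rule cSUP_upper2) simp
  then show ?thesis
    using assms x by (blast intro: cSUP_least order_trans)
qed

lemma cINF_bounds:
  fixes f :: "'a \<Rightarrow> 'b::conditionally_complete_lattice"
  assumes "X \<noteq> {}" and "\<And>x. x \<in> X \<Longrightarrow> lo \<le> f x \<and> f x \<le> hi"
  shows "lo \<le> (INF x\<in>X. f x) \<and> (INF x\<in>X. f x) \<le> hi"
proof -
  obtain x where x: "x \<in> X"
    using assms(1) by blast
  have "bdd_below (f ` X)"
    using assms(2) by (intro bdd_belowI2) blast
  then have "(INF x\<in>X. f x) \<le> f x"
    using x by (rule cINF_lower)
  then show ?thesis
    using assms x by (blast intro: cINF_greatest order_trans)
qed

context
  fixes P :: "nat set" and n :: nat
  assumes cups: "1 \<le> n" and processors: "\<exists>p\<in>P. p \<le> n"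
begin

lemma filler_moves_size_nonempty: "size S = n \<Longrightarrow> filler_moves P S \<noteq> {}"
  using processors filler_moves_nonempty by blast

lemma OPT_bounds:
  "size S = n \<Longrightarrow> backlog S - real t \<le> OPT P nn S t \<and> OPT P nn S t \<le> max (backlog S) 0 + real t"
proof (induction t arbitrary: S)
  case 0
  then show ?case
    by simp
next
  case (Suc t)
  have S: "S \<noteq> {#}"
    using Suc.prems cups by auto
  have "backlog S - 1 - real t \<le> (INF S''\<in>emptier_moves nn p S'. OPT P nn S'' t) \<and>
      (INF S''\<in>emptier_moves nn p S'. OPT P nn S'' t) \<le> max (backlog S) 0 + 1 + real t"
    if S': "(p, S') \<in> filler_moves P S" for p S'
  proof (rule cINF_bounds)
    show "emptier_moves nn p S' \<noteq> {}"
      using greedy_empty_in_emptier_moves[of p S' nn] size_filler_move[OF S'] by auto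
    fix S'' assume S'': "S'' \<in> emptier_moves nn p S'"
    have "size S'' = n"
      using size_emptier_move[OF S''] size_filler_move(1)[OF S'] Suc.prems by simp
    then show "backlog S - 1 - real t \<le> OPT P nn S'' t \<and> OPT P nn S'' t \<le> max (backlog S) 0 + 1 + real t"
      using Suc.IH[of S''] backlog_round[OF S' S'' S] by linarith
  qed
  then have "backlog S - 1 - real t \<le> OPT P nn S (Suc t) \<and> OPT P nn S (Suc t) \<le> max (backlog S) 0 + 1 + real t"
    unfolding OPT.simps using filler_moves_size_nonempty[OF Suc.prems]
    by (intro cSUP_bounds) auto
  then show ?case
    by simp
qed

lemma GREEDY_greedy_empty_le:
  assumes S': "(p, S') \<in> filler_moves P S" and S: "size S = n"
    and bound: "\<And>S''. size S'' = n \<Longrightarrow> GREEDY P nn S'' t \<le> max (backlog S'') 0 + real t"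
  shows "GREEDY P nn (greedy_empty nn p S') t \<le> max (backlog S) 0 + real (Suc t)"
proof -
  have p_le: "p \<le> size S'" and S_ne: "S \<noteq> {#}"
    using size_filler_move[OF S'] S cups by auto
  have "size (greedy_empty nn p S') = n"
    using size_greedy_empty size_filler_move(1)[OF S'] S by simp
  then have "GREEDY P nn (greedy_empty nn p S') t \<le> max (backlog (greedy_empty nn p S')) 0 + real t"
    by (rule bound)
  also have "\<dots> \<le> max (backlog S) 0 + real (Suc t)"
    using backlog_round(2)[OF S' greedy_empty_in_emptier_moves[OF p_le] S_ne] by simp
  finally show ?thesis .
qed

lemma GREEDY_upper_bound: "size S = n \<Longrightarrow> GREEDY P nn S t \<le> max (backlog S) 0 + real t"
proof (induction t arbitrary: S)
  case 0
  then show ?case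
    by simp
next
  case (Suc t)
  have "GREEDY P nn (greedy_empty nn p S') t \<le> max (backlog S) 0 + real (Suc t)"
    if "(p, S') \<in> filler_moves P S" for p S'
    using that Suc.prems Suc.IH by (rule GREEDY_greedy_empty_le)
  then show ?case
    unfolding GREEDY.simps using filler_moves_size_nonempty[OF Suc.prems]
    by (intro cSUP_least) auto
qed

lemma bdd_below_OPT_emptier_moves:
  assumes "(p, S') \<in> filler_moves P S" and "size S = n"
  shows "bdd_below ((\<lambda>S''. OPT P nn S'' t) ` emptier_moves nn p S')"
proof (rule bdd_belowI2)
  fix S'' assume S'': "S'' \<in> emptier_moves nn p S'"
  have "size S'' = n"
    using size_emptier_move[OF S''] size_filler_move(1)[OF assms(1)] assms(2) by simp
  moreover have "S \<noteq> {#}"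
    using assms(2) cups by auto
  ultimately show "backlog S - 1 - real t \<le> OPT P nn S'' t"
    using OPT_bounds[where nn = nn and t = t, OF \<open>size S'' = n\<close>]
      backlog_round(1)[OF assms(1) S''] by linarith
qed

lemma bdd_above_GREEDY_filler_moves:
  assumes "size S = n"
  shows "bdd_above ((\<lambda>m. GREEDY P nn (greedy_empty nn (fst m) (snd m)) t) ` filler_moves P S)"
  by (rule bdd_aboveI2)
    (auto intro: GREEDY_greedy_empty_le[OF _ assms GREEDY_upper_bound])

lemma OPT_le_GREEDY:
  assumes "size A = n" and "nn \<longrightarrow> (\<forall>x\<in>#A. 0 \<le> x) \<and> (\<forall>x\<in>#B. 0 \<le> x)"
    and "weakly_monopolizes A B"
  shows "OPT P nn B t \<le> GREEDY P nn A t"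
  using assms
proof (induction t arbitrary: A B)
  case 0
  then have "A \<noteq> {#}"
    using cups by auto
  then show ?case
    using weakly_monopolizes_backlog_le[OF "0.prems"(3)] by simp
next
  case (Suc t)
  have B: "size B = n"
    using weakly_monopolizes_size[OF Suc.prems(3)] Suc.prems(1) by simp
  have "(INF B''\<in>emptier_moves nn p B'. OPT P nn B'' t) \<le> GREEDY P nn A (Suc t)"
    if B': "(p, B') \<in> filler_moves P B" for p B'
  proof -
    obtain A' B'' where A': "(p, A') \<in> filler_moves P A" and B'': "B'' \<in> emptier_moves nn p B'"
      and wm: "weakly_monopolizes (greedy_empty nn p A') B''"
      using weakly_monopolizes_round[OF Suc.prems(3) B' Suc.prems(2)] .
    have size'': "size (greedy_empty nn p A') = n"
      using size_greedy_empty size_filler_move(1)[OF A'] Suc.prems(1) by simp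
    have "p \<le> size A'"
      using size_filler_move[OF A'] by simp
    then have "greedy_empty nn p A' \<in> emptier_moves nn p A'"
      by (rule greedy_empty_in_emptier_moves)
    moreover have "nn \<longrightarrow> (\<forall>x\<in>#A'. 0 \<le> x) \<and> (\<forall>x\<in>#B'. 0 \<le> x)"
      using Suc.prems(2) filler_move_nonneg[OF A'] filler_move_nonneg[OF B'] by blast
    ultimately have nonneg'': "nn \<longrightarrow> (\<forall>x\<in>#greedy_empty nn p A'. 0 \<le> x) \<and> (\<forall>x\<in>#B''. 0 \<le> x)"
      using emptier_move_nonneg B'' by blast
    have "(INF B''\<in>emptier_moves nn p B'. OPT P nn B'' t) \<le> OPT P nn B'' t"
      using bdd_below_OPT_emptier_moves[OF B' B] B'' by (rule cINF_lower)
    also have "\<dots> \<le> GREEDY P nn (greedy_empty nn p A') t"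
      using size'' nonneg'' wm by (rule Suc.IH)
    also have "\<dots> \<le> GREEDY P nn A (Suc t)"
      unfolding GREEDY.simps
      using cSUP_upper[OF A' bdd_above_GREEDY_filler_moves[OF Suc.prems(1)]] by simp
    finally show ?thesis .
  qed
  then show ?case
    unfolding OPT.simps using filler_moves_size_nonempty[OF B]
    by (intro cSUP_least) auto
qed

end

theorem lemma4p3:
  fixes A B :: "real multiset" and P :: "nat set" and nn :: bool and t :: nat
  assumes game: "(\<exists>p. 1 \<le> p \<and> p \<le> size A \<and> P = {p}) \<or> P = {1..size A}"
    and ncups: "1 \<le> size A"
    and nonneg: "nn \<longrightarrow> (\<forall>x\<in>#A. 0 \<le> x) \<and> (\<forall>x\<in>#B. 0 \<le> x)"
    and wm: "weakly_monopolizes A B"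
  shows "GREEDY P nn A t \<ge> OPT P nn B t"
proof -
  have "\<exists>p\<in>P. p \<le> size A"
    using game ncups by auto
  then show ?thesis
    using OPT_le_GREEDY[OF ncups _ refl nonneg wm] by simp
qed

end
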